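(* Let $n\ge 1$, let $\mathbf{w}\in\mathbb{R}^n$ and $\mathbf{v}=(v_1,\dots,v_n)\in\mathbb{R}^n$ with $v_e>0$ for all $e$, and let $V_c>0$. Define the canonical measure $\Lambda:\mathbb{R}^n\to\mathbb{R}^{n+1}$, $\Lambda(\boldsymbol{\rho})=(\boldsymbol{\rho}\circ\boldsymbol{\rho}-\boldsymbol{\rho},\ \boldsymbol{\rho}^T\mathbf{v}-V_c)$. Let $\mathcal{E}_a=\{(\boldsymbol{\epsilon},\nu)\in\mathbb{R}^{n+1}:\boldsymbol{\epsilon}\le 0,\ \nu\le 0\}$ and let $\Psi$ be its indicator function ($\Psi=0$ on $\mathcal{E}_a$, $+\infty$ elsewhere). Let $\mathcal{E}_a^*=\{\boldsymbol{\zeta}=(\boldsymbol{\sigma},\tau)\in\mathbb{R}^{n+1}:\boldsymbol{\sigma}\ge 0,\ \tau\ge 0\}$ and let $\Psi^*$ be its indicator function (which is the Fenchel conjugate of $\Psi$). Define $$\Pi_u(\boldsymbol{\rho})=\Psi(\Lambda(\boldsymbol{\rho}))-\mathbf{w}^T\boldsymbol{\rho},\qquad \Xi(\boldsymbol{\rho},\boldsymbol{\zeta})=\Lambda(\boldsymbol{\rho})^T\boldsymbol{\zeta}-\mathbf{w}^T\boldsymbol{\rho}-\Psi^*(\boldsymbol{\zeta}),$$ and, for $\boldsymbol{\zeta}=(\boldsymbol{\sigma},\tau)$ with all $\sigma_e\neq 0$, $$\Pi_u^d(\boldsymbol{\zeta})=P_u^d(\boldsymbol{\zeta})-\Psi^*(\boldsymbol{\zeta}),\qquad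 P_u^d(\boldsymbol{\sigma},\tau)=-\sum_{e=1}^n\frac{(\sigma_e+w_e-\tau v_e)^2}{4\sigma_e}-\tau V_c .$$ If $(\bar{\boldsymbol{\rho}},\bar{\boldsymbol{\zeta}})$ is a KKT point of $\Xi$, then $\bar{\boldsymbol{\rho}}$ is a KKT point of $\Pi_u$, $\bar{\boldsymbol{\zeta}}$ is a KKT point of $\Pi_u^d$, and $$\Pi_u(\bar{\boldsymbol{\rho}})=\Xi(\bar{\boldsymbol{\rho}},\bar{\boldsymbol{\zeta}})=\Pi_u^d(\bar{\boldsymbol{\zeta}}).$$
   Context: $\boldsymbol{\rho}\circ\boldsymbol{\rho}=(\rho_e^2)_e$ denotes the Hadamard product; vector inequalities are componentwise. In the paper $\mathbf{w}=\mathbf{c}(\mathbf{u})$ is the vector of element energies for a given displacement $\mathbf{u}$, and $\Pi_u$ is the unconstrained reformulation of the knapsack problem $\min\{-\mathbf{w}^T\boldsymbol{\rho}:\mathbf{v}^T\boldsymbol{\rho}\le V_c,\ \boldsymbol{\rho}\in\{0,1\}^n\}$. "KKT point" refers to the Karush–Kuhn–Tucker conditions for the inequality constraints $\boldsymbol{\rho}\circ\boldsymbol{\rho}-\boldsymbol{\rho}\le 0$ and $\mathbf{v}^T\boldsymbol{\rho}-V_c\le 0$ with multipliers $\boldsymbol{\sigma}$ and $\tau$ respectively, i.e. stationarity together with $\boldsymbol{\sigma}\ge 0$, $\boldsymbol{\sigma}^T(\boldsymbol{\rho}\circ\boldsymbol{\rho}-\boldsymbol{\rho})=0$, $\tau\ge0$,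 $\tau(\mathbf{v}^T\boldsymbol{\rho}-V_c)=0$ and primal feasibility. *)

theory Defs
  imports "HOL-Analysis.Analysis"
begin

(* Vectors in R^n are real^'n for a finite index type 'n; zeta = (sigma, tau) :: (real^'n) \<times> real. *)

definition hadamard :: "real^'n \<Rightarrow> real^'n \<Rightarrow> real^'n" where
  "hadamard x y = (\<chi> e. x$e * y$e)"

definition Lambda :: "real^'n \<Rightarrow> real \<Rightarrow> real^'n \<Rightarrow> (real^'n) \<times> real" where
  "Lambda v Vc \<rho> = (hadamard \<rho> \<rho> - \<rho>, \<rho> \<bullet> v - Vc)"

definition Ea :: "((real^'n) \<times> real) set" where
  "Ea = {(\<epsilon>, \<nu>). (\<forall>e. \<epsilon>$e \<le> 0) \<and> \<nu> \<le> 0}"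

definition Ea_star :: "((real^'n) \<times> real) set" where
  "Ea_star = {(\<sigma>, \<tau>). (\<forall>e. \<sigma>$e \<ge> 0) \<and> \<tau> \<ge> 0}"

definition Psi :: "(real^'n) \<times> real \<Rightarrow> ereal" where
  "Psi z = (if z \<in> Ea then 0 else \<infinity>)"

definition Psi_star :: "(real^'n) \<times> real \<Rightarrow> ereal" where
  "Psi_star z = (if z \<in> Ea_star then 0 else \<infinity>)"

definition Pi_u :: "real^'n \<Rightarrow> real^'n \<Rightarrow> real \<Rightarrow> real^'n \<Rightarrow> ereal" where
  "Pi_u w v Vc \<rho> = Psi (Lambda v Vc \<rho>) - ereal (w \<bullet> \<rho>)"

definition Xi :: "real^'n \<Rightarrow> real^'n \<Rightarrow> real \<Rightarrow> real^'n \<Rightarrow> (real^'n) \<times> real \<Rightarrow> ereal" where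
  "Xi w v Vc \<rho> \<zeta> = ereal (Lambda v Vc \<rho> \<bullet> \<zeta> - w \<bullet> \<rho>) - Psi_star \<zeta>"

definition P_u_d :: "real^'n \<Rightarrow> real^'n \<Rightarrow> real \<Rightarrow> (real^'n) \<times> real \<Rightarrow> real" where
  "P_u_d w v Vc \<zeta> = (case \<zeta> of (\<sigma>, \<tau>) \<Rightarrow>
     - (\<Sum>e\<in>UNIV. (\<sigma>$e + w$e - \<tau> * v$e)^2 / (4 * \<sigma>$e)) - \<tau> * Vc)"

(* Pi_u^d, meaningful on the domain where all sigma_e \<noteq> 0 *)
definition Pi_u_d :: "real^'n \<Rightarrow> real^'n \<Rightarrow> real \<Rightarrow> (real^'n) \<times> real \<Rightarrow> ereal" where
  "Pi_u_d w v Vc \<zeta> = ereal (P_u_d w v Vc \<zeta>) - Psi_star \<zeta>"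

(* KKT point of Xi: stationarity of Xi in rho (on Ea_star, Xi(., zeta) = Lambda(.)^T zeta - w^T .),
   zeta >= 0, complementarity sigma^T(rho o rho - rho) = 0, tau (v^T rho - Vc) = 0,
   and primal feasibility Lambda(rho) in Ea. *)
definition KKT_Xi :: "real^'n \<Rightarrow> real^'n \<Rightarrow> real \<Rightarrow> real^'n \<Rightarrow> (real^'n) \<times> real \<Rightarrow> bool" where
  "KKT_Xi w v Vc \<rho> \<zeta> \<longleftrightarrow>
     ((\<lambda>r. Lambda v Vc r \<bullet> \<zeta> - w \<bullet> r) has_derivative (\<lambda>h. 0)) (at \<rho>)
     \<and> (\<forall>e. fst \<zeta> $ e \<ge> 0) \<and> fst \<zeta> \<bullet> fst (Lambda v Vc \<rho>) = 0
     \<and> snd \<zeta> \<ge> 0 \<and> snd \<zeta> * snd (Lambda v Vc \<rho>) = 0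
     \<and> Lambda v Vc \<rho> \<in> Ea"

definition KKT_Pi_u :: "real^'n \<Rightarrow> real^'n \<Rightarrow> real \<Rightarrow> real^'n \<Rightarrow> bool" where
  "KKT_Pi_u w v Vc \<rho> \<longleftrightarrow> (\<exists>\<sigma> \<tau>.
     ((\<lambda>r. - (w \<bullet> r) + \<sigma> \<bullet> (hadamard r r - r) + \<tau> * (v \<bullet> r - Vc)) has_derivative (\<lambda>h. 0)) (at \<rho>)
     \<and> (\<forall>e. \<sigma>$e \<ge> 0) \<and> \<sigma> \<bullet> (hadamard \<rho> \<rho> - \<rho>) = 0
     \<and> \<tau> \<ge> 0 \<and> \<tau> * (v \<bullet> \<rho> - Vc) = 0
     \<and> (\<forall>e. \<rho>$e * \<rho>$e - \<rho>$e \<le> 0) \<and> v \<bullet> \<rho> - Vc \<le> 0)"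

(* KKT point of Pi_u^d = P_u^d - Psi^*: zeta in the domain (all sigma_e \<noteq> 0),
   and grad P_u^d(zeta) in the subdifferential of Psi^* at zeta, i.e.
   zeta >= 0, grad P_u^d(zeta) <= 0, zeta^T grad P_u^d(zeta) = 0. *)
definition KKT_Pi_u_d :: "real^'n \<Rightarrow> real^'n \<Rightarrow> real \<Rightarrow> (real^'n) \<times> real \<Rightarrow> bool" where
  "KKT_Pi_u_d w v Vc \<zeta> \<longleftrightarrow> (\<forall>e. fst \<zeta> $ e \<noteq> 0) \<and> (\<exists>g\<sigma> g\<tau>.
     (P_u_d w v Vc has_derivative (\<lambda>(s, t). g\<sigma> \<bullet> s + g\<tau> * t)) (at \<zeta>)
     \<and> \<zeta> \<in> Ea_star \<and> (\<forall>e. g\<sigma>$e \<le> 0) \<and> g\<tau> \<le> 0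
     \<and> fst \<zeta> \<bullet> g\<sigma> + snd \<zeta> * g\<tau> = 0)"

end

theory Submission imports Defs begin

(* Stationarity of the Lagrangian Xi(., zeta) at rho is the coordinatewise equation
   sigma_e + w_e - tau v_e = 2 sigma_e rho_e. Together with complementarity,
   Lambda(rho)^T zeta = 0, so Pi_u(rho) = Xi(rho, zeta) = - w^T rho. When all sigma_e are
   nonzero, the same equation expresses rho through zeta; substituting it shows that the
   gradient of P_u^d at zeta is Lambda(rho) and that P_u^d(zeta) = Xi(rho, zeta), so primal
   feasibility and complementarity become the KKT conditions of Pi_u^d. *)

lemma lagrangian_eq_sum:
  fixes w v s r :: "real^'n"
  shows "Lambda v Vc r \<bullet> (s, t) - w \<bullet> r =
    (\<Sum>e\<in>UNIV. s$e * (r$e * r$e - r$e) + t * v$e * r$e - w$e * r$e) - t * Vc"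
  by (simp add: Lambda_def hadamard_def inner_vec_def sum_subtractf sum.distrib
      sum_distrib_left algebra_simps)

lemma has_derivative_lagrangian:
  fixes w v s \<rho> :: "real^'n"
  shows "((\<lambda>r. Lambda v Vc r \<bullet> (s, t) - w \<bullet> r) has_derivative
     (\<lambda>h. (\<chi> e. 2 * s$e * \<rho>$e - s$e + t * v$e - w$e) \<bullet> h)) (at \<rho>)"
proof -
  have nth: "((\<lambda>r::real^'n. r $ e) has_derivative (\<lambda>h. h $ e)) F" for e F
    by (rule bounded_linear_imp_has_derivative) auto
  show ?thesis
    unfolding lagrangian_eq_sum
    apply (rule has_derivative_eq_rhs)
     apply (rule derivative_eq_intros nth refl | simp)+
    apply (simp add: inner_vec_def algebra_simps sum.distrib sum_subtractf)
    done
qed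

lemma lagrangian_stationary_imp:
  fixes w v s \<rho> :: "real^'n"
  assumes "((\<lambda>r. Lambda v Vc r \<bullet> (s, t) - w \<bullet> r) has_derivative (\<lambda>h. 0)) (at \<rho>)"
  shows "s$e + w$e - t * v$e = 2 * s$e * \<rho>$e"
proof -
  define g where "g = (\<chi> e. 2 * s$e * \<rho>$e - s$e + t * v$e - w$e)"
  have "(\<lambda>h. g \<bullet> h) = (\<lambda>h. 0)"
    using has_derivative_unique[OF has_derivative_lagrangian assms] by (simp add: g_def)
  then have "g = 0"
    by (metis inner_eq_zero_iff)
  then show ?thesis
    by (simp add: g_def vec_eq_iff algebra_simps)
qed

lemma has_derivative_P_u_d:
  fixes w v s \<rho> :: "real^'n"
  assumes nonzero: "\<forall>e. s$e \<noteq> 0"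
    and stationary: "\<forall>e. s$e + w$e - t * v$e = 2 * s$e * \<rho>$e"
  shows "(P_u_d w v Vc has_derivative
    (\<lambda>(hs, ht). fst (Lambda v Vc \<rho>) \<bullet> hs + snd (Lambda v Vc \<rho>) * ht)) (at (s, t))"
proof -
  have fst_nth: "((\<lambda>z::(real^'n) \<times> real. fst z $ e) has_derivative (\<lambda>h. fst h $ e)) F" for e F
    by (rule bounded_linear_imp_has_derivative)
      (auto intro!: bounded_linear_compose[OF bounded_linear_vec_nth] bounded_linear_fst)
  have snd: "((\<lambda>z::(real^'n) \<times> real. snd z) has_derivative (\<lambda>h. snd h)) F" for F
    by (rule has_derivative_snd[OF has_derivative_ident])
  have rho: "\<rho>$e = (s$e + w$e - t * v$e) / (2 * s$e)" for e
    using nonzero stationary by (simp add: field_simps)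
  have summand: "((\<lambda>z. (fst z $ e + w$e - snd z * v$e)\<^sup>2 / (4 * fst z $ e)) has_derivative
      (\<lambda>h. (\<rho>$e - \<rho>$e * \<rho>$e) * fst h $ e - \<rho>$e * v$e * snd h)) (at (s, t))" for e
    unfolding rho
    apply (rule has_derivative_eq_rhs)
     apply (rule derivative_eq_intros fst_nth snd refl | simp add: nonzero)+
    apply (rule ext) using nonzero[rule_format, of e] apply (simp add: field_simps power2_eq_square)
    done
  have "P_u_d w v Vc = (\<lambda>z. - (\<Sum>e\<in>UNIV. (fst z $ e + w$e - snd z * v$e)\<^sup>2 / (4 * fst z $ e))
      - snd z * Vc)"
    by (auto simp: P_u_d_def)
  then show ?thesis
    apply simp
    apply (rule has_derivative_eq_rhs)
     apply (rule has_derivative_diff[OF has_derivative_minus[OF has_derivative_sum[OF summand]]]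
        has_derivative_mult_left[OF snd])+
    apply (auto simp: Lambda_def hadamard_def inner_vec_def algebra_simps sum.distrib
        sum_subtractf sum_distrib_left sum_distrib_right)
    done
qed

lemma P_u_d_eq_lagrangian:
  fixes w v s \<rho> :: "real^'n"
  assumes nonzero: "\<forall>e. s$e \<noteq> 0"
    and stationary: "\<forall>e. s$e + w$e - t * v$e = 2 * s$e * \<rho>$e"
  shows "P_u_d w v Vc (s, t) = Lambda v Vc \<rho> \<bullet> (s, t) - w \<bullet> \<rho>"
proof -
  have quotient: "(s$e + w$e - t * v$e)\<^sup>2 / (4 * s$e) = s$e * (\<rho>$e * \<rho>$e)" for e
    using nonzero[rule_format, of e] stationary[rule_format, of e]
    by (simp add: power2_eq_square field_simps)
  have summand: "s$e * (\<rho>$e * \<rho>$e - \<rho>$e) + t * v$e * \<rho>$e - w$e * \<rho>$e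
      = - (s$e * (\<rho>$e * \<rho>$e))" for e
  proof -
    have "w$e = 2 * s$e * \<rho>$e - s$e + t * v$e"
      using stationary[rule_format, of e] by linarith
    then show ?thesis by (simp only:) (simp add: algebra_simps)
  qed
  show ?thesis
    unfolding lagrangian_eq_sum summand by (simp add: P_u_d_def quotient sum_negf)
qed

lemma KKT_Xi_stationary:
  assumes "KKT_Xi w v Vc \<rho> (s, t)"
  shows "\<forall>e. s$e + w$e - t * v$e = 2 * s$e * \<rho>$e"
  using assms unfolding KKT_Xi_def by (blast intro: lagrangian_stationary_imp)

lemma KKT_Xi_complementarity:
  assumes "KKT_Xi w v Vc \<rho> \<zeta>"
  shows "Lambda v Vc \<rho> \<bullet> \<zeta> = 0"
  using assms by (auto simp: KKT_Xi_def inner_prod_def inner_commute)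

lemma Xi_KKT_value:
  assumes "KKT_Xi w v Vc \<rho> \<zeta>"
  shows "Xi w v Vc \<rho> \<zeta> = ereal (- (w \<bullet> \<rho>))"
  using assms KKT_Xi_complementarity[OF assms]
  by (cases \<zeta>) (simp add: KKT_Xi_def Xi_def Psi_star_def Ea_star_def)

lemma KKT_Xi_imp_KKT_Pi_u:
  assumes KKT: "KKT_Xi w v Vc \<rho> (s, t)"
  shows "KKT_Pi_u w v Vc \<rho>"
  unfolding KKT_Pi_u_def
proof (intro exI conjI)
  have "(\<lambda>r. - (w \<bullet> r) + s \<bullet> (hadamard r r - r) + t * (v \<bullet> r - Vc))
      = (\<lambda>r. Lambda v Vc r \<bullet> (s, t) - w \<bullet> r)"
    by (simp add: Lambda_def inner_commute algebra_simps)
  with KKT show "((\<lambda>r. - (w \<bullet> r) + s \<bullet> (hadamard r r - r) + t * (v \<bullet> r - Vc))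
      has_derivative (\<lambda>h. 0)) (at \<rho>)"
    by (simp add: KKT_Xi_def)
qed (use KKT in \<open>auto simp: KKT_Xi_def Lambda_def Ea_def hadamard_def inner_commute\<close>)

lemma KKT_Xi_imp_KKT_Pi_u_d:
  assumes KKT: "KKT_Xi w v Vc \<rho> (s, t)" and nonzero: "\<forall>e. s$e \<noteq> 0"
  shows "KKT_Pi_u_d w v Vc (s, t)"
  unfolding KKT_Pi_u_d_def
  using nonzero has_derivative_P_u_d[OF nonzero KKT_Xi_stationary[OF KKT]]
    KKT KKT_Xi_complementarity[OF KKT]
  by (intro conjI exI[of _ "fst (Lambda v Vc \<rho>)"] exI[of _ "snd (Lambda v Vc \<rho>)"])
    (auto simp: KKT_Xi_def Ea_def Ea_star_def inner_prod_def inner_commute mult.commute)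

lemma Pi_u_d_KKT_value:
  assumes KKT: "KKT_Xi w v Vc \<rho> (s, t)" and nonzero: "\<forall>e. s$e \<noteq> 0"
  shows "Pi_u_d w v Vc (s, t) = ereal (- (w \<bullet> \<rho>))"
  using P_u_d_eq_lagrangian[OF nonzero KKT_Xi_stationary[OF KKT]] KKT_Xi_complementarity[OF KKT] KKT
  by (simp add: KKT_Xi_def Pi_u_d_def Psi_star_def Ea_star_def)

theorem theorem1:
  fixes w v :: "real^'n" and Vc :: real and \<rho> :: "real^'n" and \<zeta> :: "(real^'n) \<times> real"
  assumes "\<forall>e. v$e > 0" and "Vc > 0"
    and "KKT_Xi w v Vc \<rho> \<zeta>"
  shows "KKT_Pi_u w v Vc \<rho> \<and> Pi_u w v Vc \<rho> = Xi w v Vc \<rho> \<zeta>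
    \<and> ((\<forall>e. fst \<zeta> $ e \<noteq> 0) \<longrightarrow> KKT_Pi_u_d w v Vc \<zeta> \<and> Xi w v Vc \<rho> \<zeta> = Pi_u_d w v Vc \<zeta>)"
proof -
  obtain s t where \<zeta>: "\<zeta> = (s, t)" by (cases \<zeta>)
  note KKT = assms(3)[unfolded \<zeta>]
  have "Pi_u w v Vc \<rho> = ereal (- (w \<bullet> \<rho>))"
    using KKT by (simp add: KKT_Xi_def Pi_u_def Psi_def)
  then show ?thesis
    using KKT_Xi_imp_KKT_Pi_u[OF KKT] Xi_KKT_value[OF KKT]
      KKT_Xi_imp_KKT_Pi_u_d[OF KKT] Pi_u_d_KKT_value[OF KKT]
    by (simp add: \<zeta>)
qed

end
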